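(* Let $\Gamma$ be a set of clauses with designated blocking variables, containing a clause $C\lor b$ where $b$ is a blocking variable and this clause is the unique occurrence of $b$ in $\Gamma$. Write $C=\ell_1\lor\dots\lor\ell_t$. Then the clauses $D_i=\lnot\ell_i\lor\lnot b$, $i=1,\dots,t$, can be introduced one by one by the cost-LPR rule, i.e. for each $i$, $D_i$ is cost-LPR w.r.t. $\Gamma\cup\{D_1,\dots,D_{i-1}\}$. (Thus $b$ becomes equivalent to $\lnot C$.)
   Context: Substitutions map variables to $0$, $1$ or literals; a partial assignment has $\sigma(x)\in\{0,1,x\}$ with domain $\sigma^{-1}(\{0,1\})$; $(\sigma\circ\tau)(x)=\sigma(\tau(x))$; total means all variables assigned. $C{\upharpoonright}_\sigma$: apply $\sigma$ to the literals and simplify; $\Gamma{\upharpoonright}_\sigma$ is the multiset of $C{\upharpoonright}_\sigma\ne1$, $C\in\Gamma$. $\lnot E$ is the partial assignment falsifying all literals of $E$. $\Gamma\vdash_1 E$ means unit propagation on $\Gamma{\upharpoonright}_{\lnot E}$ derives the empty clause; $\Gamma\vdash_1\Delta$ means this for all members of $\Delta$. $\mathrm{cost}(\alpha)=\sum_i\alpha(b_i)$ over blocking variables. A clause $E$ is cost-LPR w.r.t. $\Gamma$ if there is a partial assignment $\sigma$ with the same domain as $\lnot E$, differing from $\lnot E$ on exactly one variable, such that (1) $\Gamma{\upharpoonright}_{\lnot E}\vdash_1(\Gamma\cup\{E\}){\upharpoonright}_\sigma$ and (2) $\mathrm{cost}(\tau\circ\sigma)\le\mathrm{cost}(\tau)$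 for all total $\tau\supseteq\lnot E$. *)

theory Defs
  imports Main
begin

datatype 'v lit = Pos 'v | Neg 'v

type_synonym 'v clause = "'v lit set"
type_synonym 'v formula = "'v clause set"
(* partial assignment: None means sigma(x) = x (unassigned), Some v means sigma(x) = v *)
type_synonym 'v assignment = "'v \<Rightarrow> bool option"

fun lit_var :: "'v lit \<Rightarrow> 'v" where
  "lit_var (Pos x) = x" | "lit_var (Neg x) = x"

fun neg_lit :: "'v lit \<Rightarrow> 'v lit" where
  "neg_lit (Pos x) = Neg x" | "neg_lit (Neg x) = Pos x"

fun lit_val :: "'v assignment \<Rightarrow> 'v lit \<Rightarrow> bool option" where
  "lit_val \<alpha> (Pos x) = \<alpha> x"
| "lit_val \<alpha> (Neg x) = map_option Not (\<alpha> x)"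

definition clause_sat :: "'v assignment \<Rightarrow> 'v clause \<Rightarrow> bool" where
  "clause_sat \<sigma> C \<longleftrightarrow> (\<exists>l\<in>C. lit_val \<sigma> l = Some True)"

definition clause_restr :: "'v assignment \<Rightarrow> 'v clause \<Rightarrow> 'v clause" where
  "clause_restr \<sigma> C = {l \<in> C. lit_val \<sigma> l \<noteq> Some False}"

definition restr :: "'v formula \<Rightarrow> 'v assignment \<Rightarrow> 'v formula" where
  "restr \<Gamma> \<sigma> = clause_restr \<sigma> ` {C \<in> \<Gamma>. \<not> clause_sat \<sigma> C}"

definition neg_clause :: "'v clause \<Rightarrow> 'v assignment" where
  "neg_clause E = (\<lambda>x. if Pos x \<in> E then Some False
                        else if Neg x \<in> E then Some True else None)"

fun lit_assign :: "'v lit \<Rightarrow> 'v assignment" where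
  "lit_assign (Pos x) = (\<lambda>y. if y = x then Some True else None)"
| "lit_assign (Neg x) = (\<lambda>y. if y = x then Some False else None)"

inductive up_refutes :: "'v formula \<Rightarrow> bool" where
  empty: "{} \<in> F \<Longrightarrow> up_refutes F"
| unit: "{l} \<in> F \<Longrightarrow> up_refutes (restr F (lit_assign l)) \<Longrightarrow> up_refutes F"

definition implies1 :: "'v formula \<Rightarrow> 'v clause \<Rightarrow> bool" where
  "implies1 \<Gamma> E \<longleftrightarrow> up_refutes (restr \<Gamma> (neg_clause E))"

definition implies1_set :: "'v formula \<Rightarrow> 'v formula \<Rightarrow> bool" where
  "implies1_set \<Gamma> \<Delta> \<longleftrightarrow> (\<forall>E\<in>\<Delta>. implies1 \<Gamma> E)"

(* (tau o sigma)(x) = tau(sigma(x)) *)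
definition compose :: "'v assignment \<Rightarrow> 'v assignment \<Rightarrow> 'v assignment" where
  "compose \<tau> \<sigma> = (\<lambda>x. case \<sigma> x of Some v \<Rightarrow> Some v | None \<Rightarrow> \<tau> x)"

definition total :: "'v assignment \<Rightarrow> bool" where
  "total \<tau> \<longleftrightarrow> (\<forall>x. \<tau> x \<noteq> None)"

definition cost :: "'v set \<Rightarrow> 'v assignment \<Rightarrow> nat" where
  "cost B \<alpha> = (\<Sum>b\<in>B. if \<alpha> b = Some True then 1 else 0)"

definition cost_LPR :: "'v set \<Rightarrow> 'v formula \<Rightarrow> 'v clause \<Rightarrow> bool" where
  "cost_LPR B \<Gamma> E \<longleftrightarrow>
     (\<exists>\<sigma>. dom \<sigma> = dom (neg_clause E)
        \<and> (\<exists>!x. \<sigma> x \<noteq> neg_clause E x)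
        \<and> implies1_set (restr \<Gamma> (neg_clause E)) (restr (insert E \<Gamma>) \<sigma>)
        \<and> (\<forall>\<tau>. total \<tau> \<and> neg_clause E \<subseteq>\<^sub>m \<tau> \<longrightarrow> cost B (compose \<tau> \<sigma>) \<le> cost B \<tau>))"

end

theory Submission
  imports Defs
begin

(* The witness is sigma = (not D_i)(b := false). It satisfies every D_j through not b and
   C or b through l_i, and it agrees with (not D_i) on every other clause of Gamma, since these
   do not mention b. So each clause of the reduct under sigma is already a clause of the reduct
   under (not D_i); being non-tautological, its negation falsifies it completely and unit
   propagation finds the empty clause at once. Setting a blocking variable to false never
   increases the cost. *)

lemma lit_val_fun_upd_other:
  assumes "lit_var l \<noteq> b"
  shows "lit_val (\<alpha>(b := v)) l = lit_val \<alpha> l"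
  using assms by (cases l) auto

lemma lit_val_neg_clause_true:
  assumes "neg_lit l \<in> E" and "l \<notin> E"
  shows "lit_val (neg_clause E) l = Some True"
  using assms by (cases l) (auto simp: neg_clause_def)

lemma implies1_member:
  assumes "F \<in> \<Delta>" and "\<forall>x. \<not> (Pos x \<in> F \<and> Neg x \<in> F)"
  shows "implies1 \<Delta> F"
proof -
  have falsified: "lit_val (neg_clause F) l = Some False" if "l \<in> F" for l
    using that assms(2) by (cases l) (auto simp: neg_clause_def)
  hence "\<not> clause_sat (neg_clause F) F"
    by (auto simp: clause_sat_def)
  moreover have "clause_restr (neg_clause F) F = {}"
    using falsified by (auto simp: clause_restr_def)
  ultimately have "{} \<in> restr \<Delta> (neg_clause F)"
    using assms(1) unfolding restr_def by force
  thus ?thesis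
    unfolding implies1_def by (rule up_refutes.empty)
qed

lemma implies1_set_restr_fun_upd:
  assumes "\<forall>G\<in>\<Delta>. \<not> clause_sat (\<rho>(b := v)) G \<longrightarrow>
             G \<in> \<Gamma> \<and> Pos b \<notin> G \<and> Neg b \<notin> G \<and> (\<forall>x. \<not> (Pos x \<in> G \<and> Neg x \<in> G))"
  shows "implies1_set (restr \<Gamma> \<rho>) (restr \<Delta> (\<rho>(b := v)))"
  unfolding implies1_set_def
proof
  fix F assume "F \<in> restr \<Delta> (\<rho>(b := v))"
  then obtain G where G: "G \<in> \<Delta>" "\<not> clause_sat (\<rho>(b := v)) G"
    and F: "F = clause_restr (\<rho>(b := v)) G"
    unfolding restr_def by auto
  have G_props: "G \<in> \<Gamma>" "Pos b \<notin> G" "Neg b \<notin> G" "\<forall>x. \<not> (Pos x \<in> G \<and> Neg x \<in> G)"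
    using assms G by auto
  have same_val: "lit_val (\<rho>(b := v)) m = lit_val \<rho> m" if "m \<in> G" for m
    using that G_props(2,3) by (intro lit_val_fun_upd_other) (cases m; auto)
  have "\<not> clause_sat \<rho> G"
    using G(2) same_val by (auto simp: clause_sat_def)
  moreover have "F = clause_restr \<rho> G"
    using F same_val by (auto simp: clause_restr_def)
  ultimately have "F \<in> restr \<Gamma> \<rho>"
    using G_props(1) unfolding restr_def by blast
  moreover have "\<forall>x. \<not> (Pos x \<in> F \<and> Neg x \<in> F)"
    using G_props(4) F by (auto simp: clause_restr_def)
  ultimately show "implies1 (restr \<Gamma> \<rho>) F"
    by (rule implies1_member)
qed

lemma compose_fun_upd_extension:
  assumes "\<rho> \<subseteq>\<^sub>m \<tau>"
  shows "compose \<tau> (\<rho>(b := Some c)) = \<tau>(b := Some c)"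
proof
  fix x
  show "compose \<tau> (\<rho>(b := Some c)) x = (\<tau>(b := Some c)) x"
    using assms by (cases "\<rho> x") (auto simp: compose_def map_le_def dom_def)
qed

lemma cost_fun_upd_False_le: "cost B (\<tau>(b := Some False)) \<le> cost B \<tau>"
  unfolding cost_def by (intro sum_mono) auto

lemma cost_LPR_flip_blocking:
  assumes "b \<in> B" and "Neg b \<in> E" and "Pos b \<notin> E"
    and "\<forall>G\<in>\<Gamma>. \<not> clause_sat ((neg_clause E)(b := Some False)) G \<longrightarrow>
             Pos b \<notin> G \<and> Neg b \<notin> G \<and> (\<forall>x. \<not> (Pos x \<in> G \<and> Neg x \<in> G))"
  shows "cost_LPR B \<Gamma> E"
proof -
  define \<rho> where "\<rho> = neg_clause E"
  define \<sigma> where "\<sigma> = \<rho>(b := Some False)"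
  have \<rho>_b: "\<rho> b = Some True"
    using lit_val_neg_clause_true[of "Pos b" E] assms(2,3) by (simp add: \<rho>_def)
  have "dom \<sigma> = dom \<rho>"
    using \<rho>_b by (auto simp: \<sigma>_def)
  moreover have "\<exists>!x. \<sigma> x \<noteq> \<rho> x"
    by (rule ex1I[of _ b]) (auto simp: \<sigma>_def \<rho>_b split: if_splits)
  moreover have "clause_sat \<sigma> E"
    using assms(2) by (force simp: clause_sat_def \<sigma>_def)
  hence "implies1_set (restr \<Gamma> \<rho>) (restr (insert E \<Gamma>) \<sigma>)"
    using assms(4) unfolding \<sigma>_def \<rho>_def by (intro implies1_set_restr_fun_upd) auto
  moreover have "cost B (compose \<tau> \<sigma>) \<le> cost B \<tau>" if "\<rho> \<subseteq>\<^sub>m \<tau>" for \<tau>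
    using that by (simp add: \<sigma>_def compose_fun_upd_extension cost_fun_upd_False_le)
  ultimately show ?thesis
    unfolding cost_LPR_def \<rho>_def by blast
qed

theorem lemma6p6:
  fixes \<Gamma> :: "'v formula" and B :: "'v set" and C :: "'v lit list" and b :: 'v
  assumes "\<forall>E\<in>\<Gamma>. \<forall>x. \<not> (Pos x \<in> E \<and> Neg x \<in> E)"
    and "b \<in> B"
    and "insert (Pos b) (set C) \<in> \<Gamma>"
    and "b \<notin> lit_var ` set C"
    and "\<forall>E\<in>\<Gamma>. E \<noteq> insert (Pos b) (set C) \<longrightarrow> Pos b \<notin> E \<and> Neg b \<notin> E"
  shows "\<forall>i < length C.
           cost_LPR B (\<Gamma> \<union> {{neg_lit (C ! j), Neg b} | j. j < i}) {neg_lit (C ! i), Neg b}"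
proof (intro allI impI)
  fix i assume "i < length C"
  define l where "l = C ! i"
  define E where "E = {neg_lit l, Neg b}"
  define \<sigma> where "\<sigma> = (neg_clause E)(b := Some False)"
  have "l \<in> set C" and "lit_var l \<noteq> b"
    using \<open>i < length C\<close> assms(4) unfolding l_def by force+
  have "lit_val \<sigma> l = Some True"
    using \<open>lit_var l \<noteq> b\<close> lit_val_neg_clause_true[of l E]
    by (cases l) (auto simp: \<sigma>_def E_def lit_val_fun_upd_other)
  hence C_sat: "clause_sat \<sigma> (insert (Pos b) (set C))"
    using \<open>l \<in> set C\<close> by (auto simp: clause_sat_def)
  have D_sat: "clause_sat \<sigma> {neg_lit (C ! j), Neg b}" for j
    by (force simp: clause_sat_def \<sigma>_def)
  have unaffected: "\<forall>G \<in> \<Gamma> \<union> {{neg_lit (C ! j), Neg b} | j. j < i}.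
      \<not> clause_sat \<sigma> G \<longrightarrow> Pos b \<notin> G \<and> Neg b \<notin> G \<and> (\<forall>x. \<not> (Pos x \<in> G \<and> Neg x \<in> G))"
  proof (intro ballI impI)
    fix G assume "G \<in> \<Gamma> \<union> {{neg_lit (C ! j), Neg b} | j. j < i}" and "\<not> clause_sat \<sigma> G"
    hence "G \<in> \<Gamma>" and "G \<noteq> insert (Pos b) (set C)"
      using C_sat D_sat by auto
    thus "Pos b \<notin> G \<and> Neg b \<notin> G \<and> (\<forall>x. \<not> (Pos x \<in> G \<and> Neg x \<in> G))"
      using assms(1,5) by simp
  qed
  have "Neg b \<in> E" and "Pos b \<notin> E"
    using \<open>lit_var l \<noteq> b\<close> by (cases l; simp add: E_def)+
  from cost_LPR_flip_blocking[OF assms(2) this unaffected[unfolded \<sigma>_def]]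
  show "cost_LPR B (\<Gamma> \<union> {{neg_lit (C ! j), Neg b} | j. j < i}) {neg_lit (C ! i), Neg b}"
    by (simp add: E_def l_def)
qed

end
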